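(* Consider the infinite-horizon dynamic multi-agent system described in the context, and suppose Assumption B holds and $(\mathbf A_i,\mathbf B_i)$ is controllable for every $i\in\mathcal V$. Let $\mathcal X_0\subseteq\mathbb R^{nd}$ be the set of feasible initial conditions. Then there exists a set $\mathbb X_0\subseteq\mathcal X_0$ such that (i) $\mathbb X_0$ has nonempty interior and contains the origin in its interior; and (ii) for every $\mathbf x(0)\in\mathbb X_0$, every optimal solution $(\mathbf U^\ast,\mathbf E^\ast)$ of the infinite-horizon social welfare maximization problem for $\mathbf x(0)$, together with the zero price sequence $\lambda^\ast_t=0$ for all $t\ge0$, forms an infinite-horizon competitive equilibrium.
   Context: Infinite-horizon dynamic multi-agent system: $n$ agents $\mathcal V=\{1,\dots,n\}$, time set $\mathcal T=\{0,1,2,\dots\}$. Agent $i$ has state $\mathbf x_i(t)\in\mathbb R^d$, input $\mathbf u_i(t)\in\mathbb R^m$, dynamics $\mathbf x_i(t+1)=\mathbf A_i\mathbf x_i(t)+\mathbf B_i\mathbf u_i(t)$, utility $f_i:\mathbb R^d\times\mathbb R^m\to\mathbb R$, resource consumption $h_i:\mathbb R^m\to\mathbb R$, excess resource $a_i(t)\in\mathbb R$, traded resource $e_i(t)\in\mathbb R$; $C(t)=\sum_ia_i(t)$; $\mathbf x(t)=(\mathbf x_1(t),\dots,\mathbf x_n(t))\in\mathbb R^{nd}$ with given $\mathbf x(0)$; $\mathbf U_i,\mathbf E_i$ denote the sequences $(\mathbf u_i(t))_{t\ge0}$, $(e_i(t))_{t\ge0}$, and $\mathbf U,\mathbf E$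 their collections over all agents. Assumption B: (i) each $f_i$ is concave and negative definite, i.e. $f_i(\mathbf 0,\mathbf 0)=0$ and $f_i(\mathbf x,\mathbf u)<0$ for $(\mathbf x,\mathbf u)\ne(\mathbf 0,\mathbf 0)$; (ii) each $h_i$ is non-negative and convex; (iii) $h_i(\mathbf 0)=0$; (iv) there is $C>0$ with $C(t)\ge C$ for all $t\ge0$. (Under (i) all series $\sum_t f_i$ converge in $[-\infty,0]$.) An infinite-horizon competitive equilibrium for $\mathbf x(0)$ is a triple $(\boldsymbol\lambda^\ast,\mathbf U^\ast,\mathbf E^\ast)$, $\boldsymbol\lambda^\ast=(\lambda^\ast_t)_{t\ge0}$, such that (i) for each $i$, $(\mathbf U_i^\ast,\mathbf E_i^\ast)$ attains a finite maximum of $\sum_{t=0}^\infty[f_i(\mathbf x_i(t),\mathbf u_i(t))+\lambda^\ast_te_i(t)]$ subject to the dynamics and $e_i(t)\le a_i(t)-h_i(\mathbf u_i(t))$ for all $t$; (ii) $\sum_{i=1}^ne_i^\ast(t)=0$ for all $t$. The infinite-horizon social welfare maximization problem for $\mathbf x(0)$: maximize $\sum_{i=1}^n\sum_{t=0}^\infty f_i(\mathbf x_i(t),\mathbf u_i(t))$ over $(\mathbf U,\mathbf E)$ subject to the dynamics, $e_i(t)\le a_i(t)-h_i(\mathbf u_i(t))$ and $\sum_{i=1}^ne_i(t)=0$ for all $t\ge0$. The set of feasible initial conditions $\mathcal X_0$ consists of those $\mathbf x(0)$ for which this problem has an admissible $(\mathbf U,\mathbf E)$ and finite optimal value. *)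

theory Defs
  imports "HOL-Analysis.Analysis"
begin

text \<open>Controllability of the pair (A,B) (Kalman rank condition): the column space of
  the controllability matrix [B, AB, ..., A^(d-1) B] is all of R^d, i.e. it has rank d.\<close>
definition controllable :: "real^'d^'d \<Rightarrow> real^'m^'d \<Rightarrow> bool" where
  "controllable A B \<longleftrightarrow>
     span (\<Union>k\<in>{..<CARD('d)}. range (\<lambda>u. (((\<lambda>x. A *v x) ^^ k) (B *v u)))) = UNIV"

fun traj :: "real^'d^'d \<Rightarrow> real^'m^'d \<Rightarrow> real^'d \<Rightarrow> (nat \<Rightarrow> real^'m) \<Rightarrow> nat \<Rightarrow> real^'d" where
  "traj A B x0 U 0 = x0"
| "traj A B x0 U (Suc t) = A *v traj A B x0 U t + B *v U t"

text \<open>Value of an infinite series of reals, as an extended real: the limsup of the partial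
  sums (equal to the ordinary sum in [-inf,0] for nonpositive terms, and to the sum
  whenever the series converges).\<close>
definition series_val :: "(nat \<Rightarrow> real) \<Rightarrow> ereal" where
  "series_val g = limsup (\<lambda>N. ereal (\<Sum>t<N. g t))"

definition agent_payoff ::
  "real^'d^'d \<Rightarrow> real^'m^'d \<Rightarrow> (real^'d \<Rightarrow> real^'m \<Rightarrow> real) \<Rightarrow> real^'d \<Rightarrow> (nat \<Rightarrow> real)
   \<Rightarrow> (nat \<Rightarrow> real^'m) \<Rightarrow> (nat \<Rightarrow> real) \<Rightarrow> ereal" where
  "agent_payoff A B f x0 lam U e =
     series_val (\<lambda>t. f (traj A B x0 U t) (U t) + lam t * e t)"

definition agent_feasible :: "(real^'m \<Rightarrow> real) \<Rightarrow> (nat \<Rightarrow> real) \<Rightarrow> (nat \<Rightarrow> real^'m) \<Rightarrow> (nat \<Rightarrow> real) \<Rightarrow> bool" where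
  "agent_feasible h a U e \<longleftrightarrow> (\<forall>t. e t \<le> a t - h (U t))"

definition competitive_eq ::
  "('n::finite \<Rightarrow> real^'d^'d) \<Rightarrow> ('n \<Rightarrow> real^'m^'d) \<Rightarrow> ('n \<Rightarrow> real^'d \<Rightarrow> real^'m \<Rightarrow> real)
   \<Rightarrow> ('n \<Rightarrow> real^'m \<Rightarrow> real) \<Rightarrow> ('n \<Rightarrow> nat \<Rightarrow> real) \<Rightarrow> real^'d^'n
   \<Rightarrow> (nat \<Rightarrow> real) \<Rightarrow> ('n \<Rightarrow> nat \<Rightarrow> real^'m) \<Rightarrow> ('n \<Rightarrow> nat \<Rightarrow> real) \<Rightarrow> bool" where
  "competitive_eq A B f h a x0 lam U E \<longleftrightarrow>
     (\<forall>i. agent_feasible (h i) (a i) (U i) (E i)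
          \<and> agent_payoff (A i) (B i) (f i) (x0 $ i) lam (U i) (E i) \<noteq> \<infinity>
          \<and> agent_payoff (A i) (B i) (f i) (x0 $ i) lam (U i) (E i) \<noteq> -\<infinity>
          \<and> (\<forall>U' e'. agent_feasible (h i) (a i) U' e' \<longrightarrow>
               agent_payoff (A i) (B i) (f i) (x0 $ i) lam U' e'
                 \<le> agent_payoff (A i) (B i) (f i) (x0 $ i) lam (U i) (E i)))
     \<and> (\<forall>t. (\<Sum>i\<in>UNIV. E i t) = 0)"

definition welfare ::
  "('n::finite \<Rightarrow> real^'d^'d) \<Rightarrow> ('n \<Rightarrow> real^'m^'d) \<Rightarrow> ('n \<Rightarrow> real^'d \<Rightarrow> real^'m \<Rightarrow> real)
   \<Rightarrow> real^'d^'n \<Rightarrow> ('n \<Rightarrow> nat \<Rightarrow> real^'m) \<Rightarrow> ereal" where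
  "welfare A B f x0 U = (\<Sum>i\<in>UNIV. series_val (\<lambda>t. f i (traj (A i) (B i) (x0 $ i) (U i) t) (U i t)))"

text \<open>Admissibility for the social welfare problem (dynamics are built into traj).\<close>
definition swm_admissible ::
  "('n::finite \<Rightarrow> real^'m \<Rightarrow> real) \<Rightarrow> ('n \<Rightarrow> nat \<Rightarrow> real) \<Rightarrow> ('n \<Rightarrow> nat \<Rightarrow> real^'m)
   \<Rightarrow> ('n \<Rightarrow> nat \<Rightarrow> real) \<Rightarrow> bool" where
  "swm_admissible h a U E \<longleftrightarrow>
     (\<forall>i t. E i t \<le> a i t - h i (U i t)) \<and> (\<forall>t. (\<Sum>i\<in>UNIV. E i t) = 0)"

definition swm_value ::
  "('n::finite \<Rightarrow> real^'d^'d) \<Rightarrow> ('n \<Rightarrow> real^'m^'d) \<Rightarrow> ('n \<Rightarrow> real^'d \<Rightarrow> real^'m \<Rightarrow> real)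
   \<Rightarrow> ('n \<Rightarrow> real^'m \<Rightarrow> real) \<Rightarrow> ('n \<Rightarrow> nat \<Rightarrow> real) \<Rightarrow> real^'d^'n \<Rightarrow> ereal" where
  "swm_value A B f h a x0 =
     Sup {welfare A B f x0 U | U E. swm_admissible h a U E}"

definition swm_optimal ::
  "('n::finite \<Rightarrow> real^'d^'d) \<Rightarrow> ('n \<Rightarrow> real^'m^'d) \<Rightarrow> ('n \<Rightarrow> real^'d \<Rightarrow> real^'m \<Rightarrow> real)
   \<Rightarrow> ('n \<Rightarrow> real^'m \<Rightarrow> real) \<Rightarrow> ('n \<Rightarrow> nat \<Rightarrow> real) \<Rightarrow> real^'d^'n
   \<Rightarrow> ('n \<Rightarrow> nat \<Rightarrow> real^'m) \<Rightarrow> ('n \<Rightarrow> nat \<Rightarrow> real) \<Rightarrow> bool" where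
  "swm_optimal A B f h a x0 U E \<longleftrightarrow>
     swm_admissible h a U E \<and>
     (\<forall>U' E'. swm_admissible h a U' E' \<longrightarrow> welfare A B f x0 U' \<le> welfare A B f x0 U)"

definition feasible_inits ::
  "('n::finite \<Rightarrow> real^'d^'d) \<Rightarrow> ('n \<Rightarrow> real^'m^'d) \<Rightarrow> ('n \<Rightarrow> real^'d \<Rightarrow> real^'m \<Rightarrow> real)
   \<Rightarrow> ('n \<Rightarrow> real^'m \<Rightarrow> real) \<Rightarrow> ('n \<Rightarrow> nat \<Rightarrow> real) \<Rightarrow> (real^'d^'n) set" where
  "feasible_inits A B f h a =
     {x0. (\<exists>U E. swm_admissible h a U E)
          \<and> swm_value A B f h a x0 \<noteq> \<infinity> \<and> swm_value A B f h a x0 \<noteq> -\<infinity>}"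

end

theory Submission
  imports Defs
begin

text \<open>A stage utility close to its maximum 0 forces a small state and input, since each
  utility is concave and vanishes only at the origin; a small input uses little of the resource,
  since each h is convex and vanishes at 0. Hence there is a level -\<Delta> such that whenever every
  agent's utility is above it, all consumptions are below C/n and the agents can cover them
  without net trade. By controllability an agent starting near the origin is steered to it in
  finitely many steps at arbitrarily small cost, so near the origin the optimal welfare exceeds
  -\<Delta>. Then every agent of an optimum, and every improving unilateral deviation, stays above the
  level; so the deviation would be admissible for the social problem, and optimality makes each
  agent's plan a best response at price 0.\<close>

definition mat_pow_mv :: "real^'d^'d \<Rightarrow> nat \<Rightarrow> real^'d \<Rightarrow> real^'d" where
  "mat_pow_mv A k = (\<lambda>x. A *v x) ^^ k"

lemma mat_pow_mv_0 [simp]: "mat_pow_mv A 0 x = x"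
  by (simp add: mat_pow_mv_def)

lemma mat_pow_mv_Suc: "mat_pow_mv A (Suc k) x = A *v mat_pow_mv A k x"
  by (simp add: mat_pow_mv_def)

lemma linear_mat_pow_mv: "linear (mat_pow_mv A k)"
  by (induction k) (auto simp: mat_pow_mv_def intro: linear_compose[unfolded o_def]
      matrix_vector_mul_linear linear_id[unfolded id_def])

lemma traj_eq_sum:
  "traj A B y W T = mat_pow_mv A T y + (\<Sum>t<T. mat_pow_mv A (T - Suc t) (B *v W t))"
proof (induction T)
  case 0
  then show ?case by simp
next
  case (Suc T)
  have "(\<Sum>t<T. A *v mat_pow_mv A (T - Suc t) (B *v W t))
      = (\<Sum>t<T. mat_pow_mv A (Suc T - Suc t) (B *v W t))"
    by (intro sum.cong) (simp_all add: mat_pow_mv_Suc flip: Suc_diff_Suc)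
  then show ?case
    using Suc by (simp add: matrix_vector_right_distrib mat_pow_mv_Suc
        linear_sum[OF matrix_vector_mul_linear] add.assoc)
qed

lemma controllable_sum_representation:
  fixes A :: "real^'d^'d" and B :: "real^'m^'d"
  assumes "controllable A B"
  shows "\<exists>v. z = (\<Sum>k<CARD('d). mat_pow_mv A k (B *v v k))"
proof -
  let ?S = "range (\<lambda>v. \<Sum>k<CARD('d). mat_pow_mv A k (B *v v k))"
  have "subspace ?S"
    unfolding subspace_def
  proof (intro conjI ballI allI)
    show "0 \<in> ?S"
      by (rule image_eqI[of _ _ "\<lambda>_. 0"]) (simp_all add: linear_0[OF linear_mat_pow_mv])
  next
    fix x y assume "x \<in> ?S" "y \<in> ?S"
    then obtain v w where "x = (\<Sum>k<CARD('d). mat_pow_mv A k (B *v v k))"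
      "y = (\<Sum>k<CARD('d). mat_pow_mv A k (B *v w k))" by blast
    then show "x + y \<in> ?S"
      by (intro image_eqI[of _ _ "\<lambda>k. v k + w k"])
        (simp_all add: matrix_vector_right_distrib linear_add[OF linear_mat_pow_mv] sum.distrib)
  next
    fix c and x assume "x \<in> ?S"
    then obtain v where "x = (\<Sum>k<CARD('d). mat_pow_mv A k (B *v v k))" by blast
    then show "c *\<^sub>R x \<in> ?S"
      by (intro image_eqI[of _ _ "\<lambda>k. c *\<^sub>R v k"])
        (simp_all add: linear_scale[OF matrix_vector_mul_linear]
          linear_scale[OF linear_mat_pow_mv] scaleR_sum_right)
  qed
  moreover have "range (\<lambda>u. mat_pow_mv A k (B *v u)) \<subseteq> ?S" if "k < CARD('d)" for k
  proof (intro subsetI, elim rangeE)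
    fix x u assume x: "x = mat_pow_mv A k (B *v u)"
    have "mat_pow_mv A j (B *v (if j = k then u else 0)) = (if j = k then x else 0)" for j
      by (simp add: x linear_0[OF linear_mat_pow_mv])
    then show "x \<in> ?S"
      using that by (intro image_eqI[of _ _ "\<lambda>j. if j = k then u else 0"]) simp_all
  qed
  ultimately have "span (\<Union>k\<in>{..<CARD('d)}. range (\<lambda>u. mat_pow_mv A k (B *v u))) \<subseteq> ?S"
    by (intro span_minimal) auto
  then show ?thesis
    using assms by (auto simp: controllable_def mat_pow_mv_def)
qed

lemma traj_stays_zero:
  assumes "traj A B y W T = 0" "\<forall>t\<ge>T. W t = 0"
  shows "\<forall>t\<ge>T. traj A B y W t = 0"
proof -
  have "traj A B y W (T + s) = 0" for s
    by (induction s) (use assms in auto)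
  then show ?thesis
    by (metis le_add_diff_inverse)
qed

lemma controllable_steer_to_zero:
  fixes A :: "real^'d^'d" and B :: "real^'m^'d"
  assumes "controllable A B"
  shows "\<exists>W. \<forall>t\<ge>CARD('d). W t = 0 \<and> traj A B y W t = 0"
proof -
  let ?d = "CARD('d)"
  obtain v where v: "- mat_pow_mv A ?d y = (\<Sum>k<?d. mat_pow_mv A k (B *v v k))"
    using controllable_sum_representation[OF assms] by blast
  define W where "W t = (if t < ?d then v (?d - Suc t) else 0)" for t
  have "traj A B y W ?d = mat_pow_mv A ?d y + (\<Sum>t<?d. mat_pow_mv A (?d - Suc t) (B *v v (?d - Suc t)))"
    unfolding traj_eq_sum W_def by (intro arg_cong2[where f="(+)"] sum.cong) auto
  also have "(\<Sum>t<?d. mat_pow_mv A (?d - Suc t) (B *v v (?d - Suc t))) = - mat_pow_mv A ?d y"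
    unfolding v by (rule sum.nat_diff_reindex)
  finally have "traj A B y W ?d = 0" by simp
  moreover have "\<forall>t\<ge>?d. W t = 0" by (simp add: W_def)
  ultimately show ?thesis
    using traj_stays_zero by blast
qed

lemma traj_superposition:
  fixes Ws :: "'b::finite \<Rightarrow> nat \<Rightarrow> real^'m" and ys :: "'b \<Rightarrow> real^'d"
  shows "traj A B (\<Sum>b\<in>UNIV. c b *\<^sub>R ys b) (\<lambda>t. \<Sum>b\<in>UNIV. c b *\<^sub>R Ws b t) t
       = (\<Sum>b\<in>UNIV. c b *\<^sub>R traj A B (ys b) (Ws b) t)"
  by (induction t) (simp_all add: linear_sum[OF matrix_vector_mul_linear]
      linear_scale[OF matrix_vector_mul_linear] sum.distrib scaleR_add_right)

lemma norm_sum_scaleR_component_le: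
  fixes y :: "real^'n" and p :: "'n \<Rightarrow> 'a::real_normed_vector"
  shows "norm (\<Sum>b\<in>UNIV. (y$b) *\<^sub>R p b) \<le> norm y * (\<Sum>b\<in>UNIV. norm (p b))"
proof -
  have "norm (\<Sum>b\<in>UNIV. (y$b) *\<^sub>R p b) \<le> (\<Sum>b\<in>UNIV. norm ((y$b) *\<^sub>R p b))"
    by (rule norm_sum)
  also have "\<dots> \<le> (\<Sum>b\<in>UNIV. norm y * norm (p b))"
    by (intro sum_mono) (auto intro: mult_right_mono component_le_norm_cart)
  finally show ?thesis
    by (simp add: sum_distrib_left)
qed

lemma eventually_zero_bounded:
  fixes g :: "nat \<Rightarrow> real"
  assumes "\<And>t. t \<ge> T \<Longrightarrow> g t = 0"
  obtains K where "K > 0" "\<And>t. g t \<le> K"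
proof
  have bound: "g t \<le> (\<Sum>s<T. \<bar>g s\<bar>)" for t
  proof (cases "t < T")
    case True
    then have "\<bar>g t\<bar> \<le> (\<Sum>s<T. \<bar>g s\<bar>)"
      by (intro member_le_sum) auto
    then show ?thesis
      by linarith
  qed (simp add: assms sum_nonneg)
  show "g t \<le> (\<Sum>s<T. \<bar>g s\<bar>) + 1" for t
    using bound[of t] by linarith
qed (simp add: add_nonneg_pos sum_nonneg)

text \<open>Steering each basis vector to the origin and superposing gives a steering that is linear
  in the initial state, hence bounded by a constant multiple of it.\<close>

lemma controllable_steer_bounded:
  fixes A :: "real^'d^'d" and B :: "real^'m^'d"
  assumes "controllable A B"
  obtains K where "K > 0" "\<And>y. \<exists>W. (\<forall>t\<ge>CARD('d). W t = 0 \<and> traj A B y W t = 0)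
      \<and> (\<forall>t. norm (traj A B y W t, W t) \<le> K * norm y)"
proof -
  let ?d = "CARD('d)"
  have "\<forall>b. \<exists>W. \<forall>t\<ge>?d. W t = 0 \<and> traj A B (axis b 1) W t = 0"
    using controllable_steer_to_zero[OF assms] by blast
  then obtain Wb where Wb: "\<And>b t. t \<ge> ?d \<Longrightarrow> Wb b t = 0 \<and> traj A B (axis b 1) (Wb b) t = 0"
    by (auto dest!: choice)
  define p where "p b t = (traj A B (axis b 1) (Wb b) t, Wb b t)" for b t
  have "(\<Sum>b\<in>UNIV. norm (p b t)) = 0" if "t \<ge> ?d" for t
    using Wb[OF that] by (simp add: p_def)
  then obtain K where "K > 0" and K: "\<And>t. (\<Sum>b\<in>UNIV. norm (p b t)) \<le> K"
    using eventually_zero_bounded[of ?d "\<lambda>t. \<Sum>b\<in>UNIV. norm (p b t)"] by blast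
  have "\<exists>W. (\<forall>t\<ge>?d. W t = 0 \<and> traj A B y W t = 0)
      \<and> (\<forall>t. norm (traj A B y W t, W t) \<le> K * norm y)" for y
  proof -
    define W where "W t = (\<Sum>b\<in>UNIV. (y$b) *\<^sub>R Wb b t)" for t
    have y: "y = (\<Sum>b\<in>UNIV. (y$b) *\<^sub>R axis b 1)"
      using basis_expansion[of y] by (simp add: scalar_mult_eq_scaleR)
    have traj_W: "traj A B y W t = (\<Sum>b\<in>UNIV. (y$b) *\<^sub>R traj A B (axis b 1) (Wb b) t)" for t
      using traj_superposition[of A B "\<lambda>b. y$b" "\<lambda>b. axis b 1" Wb t]
      unfolding W_def y[symmetric] .
    have "norm (traj A B y W t, W t) \<le> K * norm y" for t
    proof -
      have "(traj A B y W t, W t) = (\<Sum>b\<in>UNIV. (y$b) *\<^sub>R p b t)"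
        by (simp add: traj_W W_def p_def prod_eq_iff fst_sum snd_sum)
      then have "norm (traj A B y W t, W t) \<le> norm y * (\<Sum>b\<in>UNIV. norm (p b t))"
        using norm_sum_scaleR_component_le[of y "\<lambda>b. p b t"] by simp
      also have "\<dots> \<le> norm y * K"
        using K by (intro mult_left_mono) auto
      finally show ?thesis
        by (simp add: mult.commute)
    qed
    moreover have "W t = 0 \<and> traj A B y W t = 0" if "t \<ge> ?d" for t
      using Wb[OF that] by (simp add: traj_W W_def)
    ultimately show ?thesis
      by blast
  qed
  with \<open>K > 0\<close> show thesis
    using that by blast
qed

lemma series_val_eventually_zero:
  assumes "\<forall>t\<ge>T. g t = 0"
  shows "series_val g = ereal (\<Sum>t<T. g t)"
proof -
  have partial: "(\<Sum>t<N. g t) = (\<Sum>t<T. g t)" if "T \<le> N" for N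
    using that assms by (intro sum.mono_neutral_right) auto
  have "((\<lambda>N. ereal (\<Sum>t<N. g t)) \<longlongrightarrow> ereal (\<Sum>t<T. g t)) sequentially"
    by (rule tendsto_eventually, rule eventually_sequentiallyI[of T]) (metis partial)
  then show ?thesis
    unfolding series_val_def by (intro lim_imp_Limsup) simp_all
qed

lemma series_val_le_term:
  assumes "\<And>t. g t \<le> 0"
  shows "series_val g \<le> ereal (g s)"
proof -
  have "(\<Sum>t<N. g t) \<le> g s" if "Suc s \<le> N" for N
  proof -
    have "(\<Sum>t<N. g t) = g s + (\<Sum>t\<in>{..<N} - {s}. g t)"
      using that by (subst sum.remove[of _ s]) auto
    also have "\<dots> \<le> g s"
      using assms by (simp add: sum_nonpos)
    finally show ?thesis .
  qed
  then have "eventually (\<lambda>N. ereal (\<Sum>t<N. g t) \<le> ereal (g s)) sequentially"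
    by (intro eventually_sequentiallyI[of "Suc s"]) simp
  then show ?thesis
    unfolding series_val_def by (rule Limsup_bounded)
qed

lemma series_val_nonpos:
  assumes "\<And>t. g t \<le> 0"
  shows "series_val g \<le> 0"
  using series_val_le_term[of g 0] assms by (simp add: order_trans)

definition agent_utility ::
  "real^'d^'d \<Rightarrow> real^'m^'d \<Rightarrow> (real^'d \<Rightarrow> real^'m \<Rightarrow> real) \<Rightarrow> real^'d \<Rightarrow> (nat \<Rightarrow> real^'m) \<Rightarrow> ereal"
  where "agent_utility A B f y U = series_val (\<lambda>t. f (traj A B y U t) (U t))"

lemma welfare_eq_sum_agent_utility:
  "welfare A B f x0 U = (\<Sum>i\<in>UNIV. agent_utility (A i) (B i) (f i) (x0 $ i) (U i))"
  by (simp add: welfare_def agent_utility_def)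

lemma agent_payoff_zero_price: "agent_payoff A B f y (\<lambda>t. 0) U e = agent_utility A B f y U"
  by (simp add: agent_payoff_def agent_utility_def)

lemma agent_utility_nonpos: "(\<And>x u. f x u \<le> 0) \<Longrightarrow> agent_utility A B f y U \<le> 0"
  unfolding agent_utility_def by (rule series_val_nonpos)

lemma agent_utility_le_stage:
  "(\<And>x u. f x u \<le> 0) \<Longrightarrow> agent_utility A B f y U \<le> ereal (f (traj A B y U t) (U t))"
  unfolding agent_utility_def by (rule series_val_le_term)

lemma agent_utility_finite_if_ge:
  assumes "\<And>x u. f x u \<le> 0" and "agent_utility A B f y U \<ge> ereal c"
  shows "\<bar>agent_utility A B f y U\<bar> \<noteq> \<infinity>"
  using agent_utility_nonpos[where f=f and A=A and B=B and y=y and U=U, OF assms(1)] assms(2)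
  by auto

lemma controllable_steer_small_cost:
  fixes A :: "real^'d^'d" and B :: "real^'m^'d" and g :: "real^'d \<Rightarrow> real^'m \<Rightarrow> real"
    and \<eta> :: real
  assumes "controllable A B" and cont: "continuous_on UNIV (\<lambda>(x, u). g x u)"
    and g0: "g 0 0 = 0" and "\<eta> > 0"
  shows "\<exists>r>0. \<forall>y. norm y < r \<longrightarrow> (\<exists>W. agent_utility A B g y W \<ge> ereal (-\<eta>))"
proof -
  let ?d = "CARD('d)"
  obtain K where K: "K > 0" "\<And>y. \<exists>W. (\<forall>t\<ge>?d. W t = 0 \<and> traj A B y W t = 0)
      \<and> (\<forall>t. norm (traj A B y W t, W t) \<le> K * norm y)"
    using controllable_steer_bounded[OF assms(1)] by blast
  define \<epsilon> where "\<epsilon> = \<eta> / (real ?d + 1)"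
  have "\<epsilon> > 0"
    using \<open>\<eta> > 0\<close> by (simp add: \<epsilon>_def)
  with cont obtain \<delta> where "\<delta> > 0"
    and \<delta>: "\<And>z. dist z 0 < \<delta> \<Longrightarrow> dist ((\<lambda>(x, u). g x u) z) ((\<lambda>(x, u). g x u) 0) < \<epsilon>"
    unfolding continuous_on_iff by blast
  have "\<exists>W. agent_utility A B g y W \<ge> ereal (-\<eta>)" if "norm y < \<delta> / K" for y
  proof -
    obtain W where W: "\<forall>t\<ge>?d. W t = 0 \<and> traj A B y W t = 0"
      "\<And>t. norm (traj A B y W t, W t) \<le> K * norm y"
      using K(2) by blast
    have "norm (traj A B y W t, W t) < \<delta>" for t
      using W(2)[of t] that K(1) by (simp add: field_simps)
    then have "g (traj A B y W t) (W t) \<ge> -\<epsilon>" for t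
      using \<delta>[of "(traj A B y W t, W t)"] g0 by (simp add: dist_norm zero_prod_def)
    then have "(\<Sum>t<?d. g (traj A B y W t) (W t)) \<ge> - (real ?d * \<epsilon>)"
      using sum_mono[of "{..<?d}" "\<lambda>_. -\<epsilon>"] by simp
    moreover have "real ?d * \<epsilon> \<le> \<eta>"
      using \<open>\<eta> > 0\<close> by (simp add: \<epsilon>_def field_simps)
    moreover have "agent_utility A B g y W = ereal (\<Sum>t<?d. g (traj A B y W t) (W t))"
      unfolding agent_utility_def using W(1) g0 by (intro series_val_eventually_zero) simp
    ultimately show ?thesis
      by (intro exI[of _ W]) auto
  qed
  then show ?thesis
    using \<open>\<delta> > 0\<close> K(1) by (intro exI[of _ "\<delta> / K"]) simp
qed

lemma concave_on_UNIV_continuous: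
  fixes F :: "'a::euclidean_space \<Rightarrow> real"
  assumes "concave_on UNIV F"
  shows "continuous_on UNIV F"
proof -
  have "continuous_on UNIV (\<lambda>x. - F x)"
    using assms unfolding concave_on_def by (intro convex_on_continuous) auto
  from continuous_on_minus[OF this] show ?thesis
    by simp
qed

text \<open>Concavity along the ray through z gives F (s z) \<ge> s F z, so a level above half the
  maximum of F on the sphere of radius \<rho> cannot be reached outside that sphere.\<close>

lemma concave_superlevel_small:
  fixes F :: "'a::euclidean_space \<Rightarrow> real"
  assumes conc: "concave_on UNIV F" and F0: "F 0 = 0" and neg: "\<And>z. z \<noteq> 0 \<Longrightarrow> F z < 0"
    and "\<rho> > 0"
  obtains M where "M > 0" "\<And>z. F z \<ge> -M \<Longrightarrow> norm z < \<rho>"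
proof -
  have "continuous_on (sphere 0 \<rho>) F"
    using concave_on_UNIV_continuous[OF conc] continuous_on_subset by blast
  moreover have "sphere (0::'a) \<rho> \<noteq> {}"
    using \<open>\<rho> > 0\<close> by simp
  ultimately obtain z0 where z0: "z0 \<in> sphere 0 \<rho>" "\<And>y. y \<in> sphere 0 \<rho> \<Longrightarrow> F y \<le> F z0"
    using continuous_attains_sup[OF compact_sphere] by blast
  then have "F z0 < 0"
    using \<open>\<rho> > 0\<close> by (intro neg) auto
  moreover have "norm z < \<rho>" if Fz: "F z \<ge> F z0 / 2" for z
  proof (rule ccontr)
    assume "\<not> norm z < \<rho>"
    define s where "s = \<rho> / norm z"
    have "norm z > 0"
      using \<open>\<not> norm z < \<rho>\<close> \<open>\<rho> > 0\<close> by linarith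
    then have "s > 0" "s \<le> 1"
      using \<open>\<not> norm z < \<rho>\<close> \<open>\<rho> > 0\<close> by (simp_all add: s_def)
    have "s * F z \<le> F (s *\<^sub>R z)"
      using concave_onD[OF conc, of s 0 z] \<open>s > 0\<close> \<open>s \<le> 1\<close> F0 by simp
    also have "\<dots> \<le> F z0"
    proof (rule z0(2))
      show "s *\<^sub>R z \<in> sphere 0 \<rho>"
        using \<open>norm z > 0\<close> \<open>\<rho> > 0\<close> by (simp add: s_def)
    qed
    moreover have "s * (F z0 / 2) \<le> s * F z"
      using Fz \<open>s > 0\<close> by (intro mult_left_mono) auto
    moreover have "F z0 / 2 \<le> s * (F z0 / 2)"
      using \<open>F z0 < 0\<close> \<open>s \<le> 1\<close> mult_right_mono_neg[of s 1 "F z0 / 2"] by simp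
    ultimately show False
      using \<open>F z0 < 0\<close> by linarith
  qed
  ultimately show thesis
    using that[of "- F z0 / 2"] by simp
qed

lemma stage_utility_level_bounds_consumption:
  fixes f :: "'a::euclidean_space \<Rightarrow> 'b::euclidean_space \<Rightarrow> real" and h :: "'b \<Rightarrow> real"
  assumes "concave_on UNIV (\<lambda>(x, u). f x u)" "f 0 0 = 0"
    "\<And>x u. (x, u) \<noteq> (0, 0) \<Longrightarrow> f x u < 0"
    and "convex_on UNIV h" "h 0 = 0" "c > 0"
  obtains M where "M > 0" "\<And>x u. f x u \<ge> -M \<Longrightarrow> h u < c"
proof -
  have "continuous_on UNIV h"
    using assms(4) by (intro convex_on_continuous) auto
  then obtain \<rho> where "\<rho> > 0" and \<rho>: "\<And>u. dist u 0 < \<rho> \<Longrightarrow> dist (h u) (h 0) < c"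
    using \<open>c > 0\<close> unfolding continuous_on_iff by blast
  obtain M where "M > 0" and M: "\<And>z. (\<lambda>(x, u). f x u) z \<ge> -M \<Longrightarrow> norm z < \<rho>"
    using concave_superlevel_small[OF assms(1), of \<rho>] assms(2,3) \<open>\<rho> > 0\<close>
    by (auto simp: zero_prod_def)
  have "h u < c" if "f x u \<ge> -M" for x u
  proof -
    have "norm u < \<rho>"
      using M[of "(x, u)"] that norm_snd_le[of u x] by simp
    then show ?thesis
      using \<rho>[of u] \<open>h 0 = 0\<close> by simp
  qed
  with \<open>M > 0\<close> show thesis
    using that by blast
qed

lemma finite_uniform_positive:
  fixes P :: "'i::finite \<Rightarrow> real \<Rightarrow> bool"
  assumes "\<And>i. \<exists>r>0. P i r" and "\<And>i r s. P i r \<Longrightarrow> s \<le> r \<Longrightarrow> P i s"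
  shows "\<exists>r>0. \<forall>i. P i r"
proof -
  obtain R where R: "\<And>i. R i > 0 \<and> P i (R i)"
    using choice[of "\<lambda>i r. r > 0 \<and> P i r"] assms(1) by blast
  have "Min (range R) > 0" "\<And>i. Min (range R) \<le> R i"
    using R by simp_all
  then show ?thesis
    using R assms(2) by blast
qed

text \<open>The resource can be shared without trade once every consumption is below C/n: each agent
  gets its consumption plus an equal share of the slack.\<close>

lemma swm_admissible_if_consumption_bounded:
  fixes h :: "'n::finite \<Rightarrow> real^'m \<Rightarrow> real" and U :: "'n \<Rightarrow> nat \<Rightarrow> real^'m"
  assumes h_le: "\<And>i t. h i (U i t) \<le> C / CARD('n)" and a_ge: "\<And>t. (\<Sum>i\<in>UNIV. a i t) \<ge> C"
  shows "\<exists>E. swm_admissible h a U E"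
proof -
  define slack where "slack t = (\<Sum>i\<in>UNIV. a i t) - (\<Sum>i\<in>UNIV. h i (U i t))" for t
  have "slack t \<ge> 0" for t
  proof -
    have "(\<Sum>i\<in>UNIV. h i (U i t)) \<le> (\<Sum>i\<in>(UNIV::'n set). C / CARD('n))"
      using h_le by (intro sum_mono)
    then show ?thesis
      using a_ge[of t] by (simp add: slack_def)
  qed
  then show ?thesis
    unfolding swm_admissible_def
    by (intro exI[of _ "\<lambda>i t. a i t - h i (U i t) - slack t / CARD('n)"])
      (simp add: sum_subtractf slack_def)
qed

lemma swm_admissible_if_utilities_above_level:
  fixes f :: "'n::finite \<Rightarrow> real^'d \<Rightarrow> real^'m \<Rightarrow> real" and x0 :: "real^'d^'n"
  assumes f_nonpos: "\<And>i x u. f i x u \<le> 0"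
    and level: "\<And>i x u. f i x u \<ge> -\<Delta> \<Longrightarrow> h i u < C / CARD('n)"
    and a_ge: "\<And>t. (\<Sum>i\<in>UNIV. a i t) \<ge> C"
    and above: "\<And>i. agent_utility (A i) (B i) (f i) (x0 $ i) (U i) \<ge> ereal (-\<Delta>)"
  shows "\<exists>E. swm_admissible h a U E"
proof (rule swm_admissible_if_consumption_bounded[OF _ a_ge])
  fix i t
  have "ereal (-\<Delta>) \<le> ereal (f i (traj (A i) (B i) (x0 $ i) (U i) t) (U i t))"
    using above[of i] agent_utility_le_stage[of "f i", OF f_nonpos] by (rule order_trans)
  then show "h i (U i t) \<le> C / CARD('n)"
    using level less_imp_le by (metis ereal_less_eq(3))
qed

lemma welfare_ge_if_agent_utilities_ge:
  fixes x0 :: "real^'d^'n::finite" and c :: real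
  assumes "\<And>i. agent_utility (A i) (B i) (f i) (x0 $ i) (U i) \<ge> ereal c"
  shows "welfare A B f x0 U \<ge> ereal (CARD('n) * c)"
proof -
  have "(\<Sum>i\<in>(UNIV::'n set). ereal c) \<le> welfare A B f x0 U"
    unfolding welfare_eq_sum_agent_utility by (intro sum_mono assms)
  then show ?thesis
    by simp
qed

lemma welfare_split_agent:
  "welfare A B f x0 U = agent_utility (A i) (B i) (f i) (x0 $ i) (U i)
     + (\<Sum>j\<in>UNIV - {i}. agent_utility (A j) (B j) (f j) (x0 $ j) (U j))"
  unfolding welfare_eq_sum_agent_utility by (rule sum.remove) auto

lemma agent_utility_ge_if_welfare_ge:
  assumes f_nonpos: "\<And>i x u. f i x u \<le> 0" and "welfare A B f x0 U \<ge> ereal c"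
  shows "agent_utility (A i) (B i) (f i) (x0 $ i) (U i) \<ge> ereal c"
proof -
  have "(\<Sum>j\<in>UNIV - {i}. agent_utility (A j) (B j) (f j) (x0 $ j) (U j)) \<le> 0"
    by (intro sum_nonpos agent_utility_nonpos f_nonpos)
  then have "welfare A B f x0 U \<le> agent_utility (A i) (B i) (f i) (x0 $ i) (U i)"
    unfolding welfare_split_agent[where i=i] using add_left_mono by fastforce
  then show ?thesis
    using assms(2) by simp
qed

text \<open>An improving unilateral deviation keeps every agent above the level, so it would be
  admissible for the social problem and would increase welfare; the other agents' utilities are
  finite, which makes the comparison of welfares cancellable.\<close>

lemma swm_optimal_best_response:
  fixes x0 :: "real^'d^'n::finite"
  assumes f_nonpos: "\<And>i x u. f i x u \<le> 0"
    and admissible: "\<And>V. (\<And>j. agent_utility (A j) (B j) (f j) (x0 $ j) (V j) \<ge> ereal (-\<Delta>))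
        \<Longrightarrow> \<exists>E. swm_admissible h a V E"
    and opt: "swm_optimal A B f h a x0 U E" and above: "welfare A B f x0 U \<ge> ereal (-\<Delta>)"
  shows "agent_utility (A i) (B i) (f i) (x0 $ i) W \<le> agent_utility (A i) (B i) (f i) (x0 $ i) (U i)"
proof (rule ccontr)
  let ?u = "\<lambda>j V. agent_utility (A j) (B j) (f j) (x0 $ j) V"
  let ?rest = "\<Sum>j\<in>UNIV - {i}. ?u j (U j)"
  assume "\<not> ?thesis"
  then have better: "?u i W > ?u i (U i)"
    by simp
  have U_above: "?u j (U j) \<ge> ereal (-\<Delta>)" for j
    by (rule agent_utility_ge_if_welfare_ge[OF f_nonpos above])
  define U' where "U' = U(i := W)"
  have "?u j (U' j) \<ge> ereal (-\<Delta>)" for j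
    using U_above[of j] U_above[of i] better by (cases "j = i") (auto simp: U'_def)
  then obtain E' where "swm_admissible h a U' E'"
    using admissible by blast
  then have "welfare A B f x0 U' \<le> welfare A B f x0 U"
    using opt unfolding swm_optimal_def by blast
  moreover have "welfare A B f x0 U' = ?u i W + ?rest"
    unfolding welfare_split_agent[where i=i] by (simp add: U'_def)
  ultimately have "?u i W + ?rest \<le> ?u i (U i) + ?rest"
    using welfare_split_agent[of A B f x0 U i] by simp
  moreover have "\<bar>?rest\<bar> \<noteq> \<infinity>"
  proof -
    have "\<bar>?u j (U j)\<bar> \<noteq> \<infinity>" for j
      by (rule agent_utility_finite_if_ge[OF f_nonpos[of j] U_above])
    then show ?thesis
      by (simp add: sum_Inf)
  qed
  ultimately have "?u i W \<le> ?u i (U i)"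
    by (auto simp: ereal_add_le_add_iff2)
  with better show False
    by simp
qed

lemma competitive_eq_zero_price_if_optimal_above_level:
  fixes x0 :: "real^'d^'n::finite"
  assumes f_nonpos: "\<And>i x u. f i x u \<le> 0"
    and admissible: "\<And>V. (\<And>j. agent_utility (A j) (B j) (f j) (x0 $ j) (V j) \<ge> ereal (-\<Delta>))
        \<Longrightarrow> \<exists>E. swm_admissible h a V E"
    and opt: "swm_optimal A B f h a x0 U E" and above: "welfare A B f x0 U \<ge> ereal (-\<Delta>)"
  shows "competitive_eq A B f h a x0 (\<lambda>t. 0) U E"
proof -
  have "agent_utility (A i) (B i) (f i) (x0 $ i) (U i) \<noteq> \<infinity>
      \<and> agent_utility (A i) (B i) (f i) (x0 $ i) (U i) \<noteq> -\<infinity>" for i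
    using agent_utility_finite_if_ge[OF f_nonpos[of i] agent_utility_ge_if_welfare_ge[OF f_nonpos above]]
    by auto
  moreover have "swm_admissible h a U E"
    using opt by (simp add: swm_optimal_def)
  ultimately show ?thesis
    using swm_optimal_best_response[OF f_nonpos admissible opt above]
    by (simp add: competitive_eq_def agent_payoff_zero_price agent_feasible_def swm_admissible_def)
qed

lemma feasible_inits_if_welfare_above:
  assumes f_nonpos: "\<And>i x u. f i x u \<le> 0"
    and "swm_admissible h a D E" and "welfare A B f x0 D \<ge> ereal c"
  shows "x0 \<in> feasible_inits A B f h a"
proof -
  have "welfare A B f x0 D \<le> swm_value A B f h a x0"
    unfolding swm_value_def using assms(2) by (intro Sup_upper) blast
  moreover have "swm_value A B f h a x0 \<le> 0"
    unfolding swm_value_def welfare_eq_sum_agent_utility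
    by (intro Sup_least) (auto intro: sum_nonpos agent_utility_nonpos f_nonpos)
  ultimately show ?thesis
    using assms(2,3) unfolding feasible_inits_def by auto
qed

lemma uniform_consumption_level:
  fixes f :: "'n::finite \<Rightarrow> real^'d \<Rightarrow> real^'m \<Rightarrow> real" and h :: "'n \<Rightarrow> real^'m \<Rightarrow> real"
  assumes f_concave: "\<And>i. concave_on UNIV (\<lambda>(x, u). f i x u)"
    and f_zero: "\<And>i. f i 0 0 = 0" and f_neg: "\<And>i x u. (x, u) \<noteq> (0, 0) \<Longrightarrow> f i x u < 0"
    and h_convex: "\<And>i. convex_on UNIV (h i)" and h_zero: "\<And>i. h i 0 = 0" and "c > 0"
  shows "\<exists>\<Delta>>0. \<forall>i x u. f i x u \<ge> -\<Delta> \<longrightarrow> h i u < c"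
proof (rule finite_uniform_positive[where P="\<lambda>i M. \<forall>x u. f i x u \<ge> -M \<longrightarrow> h i u < c"])
  fix i
  obtain M where "M > 0" "\<And>x u. f i x u \<ge> -M \<Longrightarrow> h i u < c"
    using stage_utility_level_bounds_consumption[where f="f i" and h="h i" and c=c]
      f_concave f_zero f_neg h_convex h_zero \<open>c > 0\<close> by blast
  then show "\<exists>M>0. \<forall>x u. f i x u \<ge> -M \<longrightarrow> h i u < c"
    by blast
qed (meson neg_le_iff_le order_trans)

lemma uniform_steering_radius:
  fixes A :: "'n::finite \<Rightarrow> real^'d^'d" and B :: "'n \<Rightarrow> real^'m^'d"
    and f :: "'n \<Rightarrow> real^'d \<Rightarrow> real^'m \<Rightarrow> real" and \<eta> :: real
  assumes ctrb: "\<And>i. controllable (A i) (B i)"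
    and f_concave: "\<And>i. concave_on UNIV (\<lambda>(x, u). f i x u)" and f_zero: "\<And>i. f i 0 0 = 0"
    and "\<eta> > 0"
  shows "\<exists>r>0. \<forall>x0 :: real^'d^'n. norm x0 < r \<longrightarrow>
           (\<exists>D. \<forall>i. agent_utility (A i) (B i) (f i) (x0 $ i) (D i) \<ge> ereal (-\<eta>))"
proof -
  let ?P = "\<lambda>i r. \<forall>y. norm y < r \<longrightarrow> (\<exists>W. agent_utility (A i) (B i) (f i) y W \<ge> ereal (-\<eta>))"
  have "\<exists>r>0. \<forall>i. ?P i r"
  proof (rule finite_uniform_positive)
    show "\<exists>r>0. ?P i r" for i
      using \<open>\<eta> > 0\<close>
      by (intro controllable_steer_small_cost[OF ctrb concave_on_UNIV_continuous[OF f_concave] f_zero])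
  qed (meson order.strict_trans2)
  then obtain r where "r > 0" and steer: "\<And>i. ?P i r"
    by blast
  have "\<exists>D. \<forall>i. agent_utility (A i) (B i) (f i) (x0 $ i) (D i) \<ge> ereal (-\<eta>)" if "norm x0 < r" for x0
  proof -
    have "norm (x0 $ i) < r" for i
      using Finite_Cartesian_Product.norm_nth_le[of x0 i] that by linarith
    then have "\<forall>i. \<exists>W. agent_utility (A i) (B i) (f i) (x0 $ i) W \<ge> ereal (-\<eta>)"
      using steer by blast
    then show ?thesis
      by (rule choice)
  qed
  with \<open>r > 0\<close> show ?thesis
    by blast
qed

lemma zero_price_equilibrium_if_steerable:
  fixes x0 :: "real^'d^'n::finite"
  assumes f_nonpos: "\<And>i x u. f i x u \<le> 0" and "\<Delta> \<ge> 0"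
    and admissible: "\<And>V. (\<And>j. agent_utility (A j) (B j) (f j) (x0 $ j) (V j) \<ge> ereal (-\<Delta>))
        \<Longrightarrow> \<exists>E. swm_admissible h a V E"
    and D: "\<And>i. agent_utility (A i) (B i) (f i) (x0 $ i) (D i) \<ge> ereal (- (\<Delta> / CARD('n)))"
  shows "x0 \<in> feasible_inits A B f h a
    \<and> (\<forall>U E. swm_optimal A B f h a x0 U E \<longrightarrow> competitive_eq A B f h a x0 (\<lambda>t. 0) U E)"
proof -
  have "\<Delta> / CARD('n) \<le> \<Delta>"
    using \<open>\<Delta> \<ge> 0\<close> by (simp add: divide_le_eq mult_le_cancel_left1 Suc_le_eq)
  then have "agent_utility (A i) (B i) (f i) (x0 $ i) (D i) \<ge> ereal (-\<Delta>)" for i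
    using D[of i] by (meson ereal_less_eq(3) neg_le_iff_le order_trans)
  then obtain ED where ED: "swm_admissible h a D ED"
    using admissible by blast
  have welfare_D: "welfare A B f x0 D \<ge> ereal (-\<Delta>)"
    using welfare_ge_if_agent_utilities_ge[OF D] by simp
  have "competitive_eq A B f h a x0 (\<lambda>t. 0) U E" if "swm_optimal A B f h a x0 U E" for U E
  proof (rule competitive_eq_zero_price_if_optimal_above_level[where f=f, OF f_nonpos admissible that])
    have "welfare A B f x0 D \<le> welfare A B f x0 U"
      using that ED unfolding swm_optimal_def by blast
    with welfare_D show "welfare A B f x0 U \<ge> ereal (-\<Delta>)"
      by (rule order_trans)
  qed
  moreover have "x0 \<in> feasible_inits A B f h a"
    by (rule feasible_inits_if_welfare_above[where f=f, OF f_nonpos ED welfare_D])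
  ultimately show ?thesis
    by blast
qed

theorem theorem7:
  fixes A :: "'n::finite \<Rightarrow> real^'d^'d"
    and B :: "'n \<Rightarrow> real^'m^'d"
    and f :: "'n \<Rightarrow> real^'d \<Rightarrow> real^'m \<Rightarrow> real"
    and h :: "'n \<Rightarrow> real^'m \<Rightarrow> real"
    and a :: "'n \<Rightarrow> nat \<Rightarrow> real"
  assumes f_concave: "\<And>i. concave_on UNIV (\<lambda>(x, u). f i x u)"
    and f_zero: "\<And>i. f i 0 0 = 0"
    and f_neg: "\<And>i x u. (x, u) \<noteq> (0, 0) \<Longrightarrow> f i x u < 0"
    and h_nonneg: "\<And>i u. h i u \<ge> 0"
    and h_convex: "\<And>i. convex_on UNIV (h i)"
    and h_zero: "\<And>i. h i 0 = 0"
    and C_lower: "\<exists>C>0. \<forall>t. (\<Sum>i\<in>UNIV. a i t) \<ge> C"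
    and ctrb: "\<And>i. controllable (A i) (B i)"
  shows "\<exists>X0 \<subseteq> feasible_inits A B f h a.
           interior X0 \<noteq> {} \<and> 0 \<in> interior X0 \<and>
           (\<forall>x0\<in>X0. \<forall>U E. swm_optimal A B f h a x0 U E \<longrightarrow>
              competitive_eq A B f h a x0 (\<lambda>t. 0) U E)"
proof -
  \<comment> \<open>Only upper bounds on the consumption h are ever used.\<close>
  obtain C where "C > 0" and a_ge: "\<And>t. (\<Sum>i\<in>UNIV. a i t) \<ge> C"
    using C_lower by blast
  have f_nonpos: "f i x u \<le> 0" for i x u
    using f_neg[of x u i] f_zero[of i] by (cases "(x, u) = (0, 0)") auto
  obtain \<Delta> where "\<Delta> > 0" and level: "\<And>i x u. f i x u \<ge> -\<Delta> \<Longrightarrow> h i u < C / CARD('n)"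
    using uniform_consumption_level[where f=f and h=h and c="C / CARD('n)",
        OF f_concave f_zero f_neg h_convex h_zero] \<open>C > 0\<close> by auto
  have admissible: "\<exists>E. swm_admissible h a V E"
    if "\<And>i. agent_utility (A i) (B i) (f i) (x0 $ i) (V i) \<ge> ereal (-\<Delta>)" for x0 V
    by (rule swm_admissible_if_utilities_above_level[OF f_nonpos level a_ge that])
  obtain r where "r > 0" and steer: "\<And>x0 :: real^'d^'n. norm x0 < r \<Longrightarrow>
      \<exists>D. \<forall>i. agent_utility (A i) (B i) (f i) (x0 $ i) (D i) \<ge> ereal (- (\<Delta> / CARD('n)))"
    using uniform_steering_radius[where A=A and B=B and f=f and \<eta>="\<Delta> / CARD('n)",
        OF ctrb f_concave f_zero] \<open>\<Delta> > 0\<close> by auto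
  have "x0 \<in> feasible_inits A B f h a \<and> (\<forall>U E. swm_optimal A B f h a x0 U E \<longrightarrow>
      competitive_eq A B f h a x0 (\<lambda>t. 0) U E)" if "norm x0 < r" for x0
    using steer[OF that] zero_price_equilibrium_if_steerable[where f=f, OF f_nonpos _ admissible]
      \<open>\<Delta> > 0\<close> by (metis less_imp_le)
  with \<open>r > 0\<close> show ?thesis
    by (intro exI[of _ "ball 0 r"]) (auto simp: dist_norm)
qed

end
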